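(* Let $\mathcal{M}=(E,\rho)$ be a $q$-matroid, $E_1=\mathrm{cyc}(E)$, and $E_2\le E$ with $E_1\oplus E_2=E$. Let $\mathcal{M}_i=\mathcal{M}|_{E_i}$ for $i=1,2$. Then (a) $\mathcal{M}_2$ is the free $q$-matroid on $E_2$; (b) $\mathcal{Z}(\mathcal{M})=\mathcal{Z}(\mathcal{M}_1)$; (c) $\mathcal{M}=\mathcal{M}_1\oplus\mathcal{M}_2$.
   Context: Let $\mathbb{F}=\mathbb{F}_q$. A $q$-matroid is $\mathcal{M}=(E,\rho)$, $E$ a finite-dimensional $\mathbb{F}$-vector space, $\rho$ from subspaces to $\mathbb{Z}_{\ge0}$ with $0\le\rho(V)\le\dim V$, monotone and submodular. The restriction $\mathcal{M}|_X$ is $(X,\rho|_{\mathcal{L}(X)})$. Free $q$-matroid on $E_2$: $\rho(V)=\dim V$ for all $V\le E_2$. Flat: $\rho(F+\langle x\rangle)>\rho(F)$ for all $x\notin F$. Cyclic core: $\mathrm{cyc}(V)=\{x\in V\mid\rho(W)=\rho(V)\text{ for all }W\le V\text{ with }W+\langle x\rangle=V\}$; cyclic: $\mathrm{cyc}(V)=V$; $\mathcal{Z}(\mathcal{M})$: the set of cyclic flats. $\mathcal{M}=\mathcal{M}_1\oplus\mathcal{M}_2$ means $E=E_1\oplus E_2$ and $\rho(V)=\dim V+\min_{X\le V}(\rho_1(\pi_1(X))+\rho_2(\pi_2(X))-\dim X)$ for all $V$, where $\rho_i$ is the rank function of $\mathcal{M}_i$ and $\pi_i:E\to E_i$ the projections.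 *)

theory Defs
  imports Complex_Main
begin

text \<open>Vector spaces over a field 'f are given by a scalar multiplication
  scale :: 'f => 'v => 'v satisfying the locale vector_space.
  The ambient space E of a q-matroid is a finite-dimensional subspace (a set of vectors),
  its subspaces are the subspaces of the vector space contained in E.\<close>

definition qsubsp :: "('f::field \<Rightarrow> 'v::ab_group_add \<Rightarrow> 'v) \<Rightarrow> 'v set \<Rightarrow> 'v set \<Rightarrow> bool" where
  "qsubsp scale E V \<longleftrightarrow> module.subspace scale V \<and> V \<subseteq> E"

definition qplus :: "('f::field \<Rightarrow> 'v::ab_group_add \<Rightarrow> 'v) \<Rightarrow> 'v set \<Rightarrow> 'v set \<Rightarrow> 'v set" where
  "qplus scale V W = module.span scale (V \<union> W)"

definition qdim :: "('f::field \<Rightarrow> 'v::ab_group_add \<Rightarrow> 'v) \<Rightarrow> 'v set \<Rightarrow> nat" where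
  "qdim scale V = vector_space.dim scale V"

text \<open>q-matroid (E, rho) over the field 'f (required to be finite, i.e. F = F_q).\<close>
definition is_qmatroid :: "('f::field \<Rightarrow> 'v::ab_group_add \<Rightarrow> 'v) \<Rightarrow> 'v set \<Rightarrow> ('v set \<Rightarrow> nat) \<Rightarrow> bool" where
  "is_qmatroid scale E \<rho> \<longleftrightarrow>
     vector_space scale \<and> finite (UNIV :: 'f set) \<and>
     module.subspace scale E \<and> (\<exists>B. finite B \<and> module.span scale B = E) \<and>
     (\<forall>V. qsubsp scale E V \<longrightarrow> 0 \<le> \<rho> V \<and> \<rho> V \<le> qdim scale V) \<and>
     (\<forall>V W. qsubsp scale E V \<and> qsubsp scale E W \<and> V \<subseteq> W \<longrightarrow> \<rho> V \<le> \<rho> W) \<and>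
     (\<forall>V W. qsubsp scale E V \<and> qsubsp scale E W \<longrightarrow>
        \<rho> (qplus scale V W) + \<rho> (V \<inter> W) \<le> \<rho> V + \<rho> W)"

definition is_free_qmatroid :: "('f::field \<Rightarrow> 'v::ab_group_add \<Rightarrow> 'v) \<Rightarrow> 'v set \<Rightarrow> ('v set \<Rightarrow> nat) \<Rightarrow> bool" where
  "is_free_qmatroid scale E \<rho> \<longleftrightarrow> (\<forall>V. qsubsp scale E V \<longrightarrow> \<rho> V = qdim scale V)"

definition qflat :: "('f::field \<Rightarrow> 'v::ab_group_add \<Rightarrow> 'v) \<Rightarrow> 'v set \<Rightarrow> ('v set \<Rightarrow> nat) \<Rightarrow> 'v set \<Rightarrow> bool" where
  "qflat scale E \<rho> F \<longleftrightarrow> qsubsp scale E F \<and>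
     (\<forall>x \<in> E - F. \<rho> (qplus scale F (module.span scale {x})) > \<rho> F)"

definition qcyc :: "('f::field \<Rightarrow> 'v::ab_group_add \<Rightarrow> 'v) \<Rightarrow> ('v set \<Rightarrow> nat) \<Rightarrow> 'v set \<Rightarrow> 'v set" where
  "qcyc scale \<rho> V = {x \<in> V. \<forall>W. module.subspace scale W \<and> W \<subseteq> V \<and>
        qplus scale W (module.span scale {x}) = V \<longrightarrow> \<rho> W = \<rho> V}"

definition qcyclic :: "('f::field \<Rightarrow> 'v::ab_group_add \<Rightarrow> 'v) \<Rightarrow> ('v set \<Rightarrow> nat) \<Rightarrow> 'v set \<Rightarrow> bool" where
  "qcyclic scale \<rho> V \<longleftrightarrow> qcyc scale \<rho> V = V"

definition qcyclic_flats :: "('f::field \<Rightarrow> 'v::ab_group_add \<Rightarrow> 'v) \<Rightarrow> 'v set \<Rightarrow> ('v set \<Rightarrow> nat) \<Rightarrow> 'v set set" where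
  "qcyclic_flats scale E \<rho> = {F. qflat scale E \<rho> F \<and> qcyclic scale \<rho> F}"

definition qdirect_sum :: "('f::field \<Rightarrow> 'v::ab_group_add \<Rightarrow> 'v) \<Rightarrow> 'v set \<Rightarrow> 'v set \<Rightarrow> 'v set \<Rightarrow> bool" where
  "qdirect_sum scale E E1 E2 \<longleftrightarrow> qsubsp scale E E1 \<and> qsubsp scale E E2 \<and>
     E1 \<inter> E2 = {0} \<and> qplus scale E1 E2 = E"

definition qproj1 :: "'v::ab_group_add set \<Rightarrow> 'v set \<Rightarrow> 'v \<Rightarrow> 'v" where
  "qproj1 E1 E2 v = (THE a. a \<in> E1 \<and> (\<exists>b \<in> E2. v = a + b))"

definition qproj2 :: "'v::ab_group_add set \<Rightarrow> 'v set \<Rightarrow> 'v \<Rightarrow> 'v" where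
  "qproj2 E1 E2 v = (THE b. b \<in> E2 \<and> (\<exists>a \<in> E1. v = a + b))"

definition is_qmatroid_direct_sum ::
  "('f::field \<Rightarrow> 'v::ab_group_add \<Rightarrow> 'v) \<Rightarrow> 'v set \<Rightarrow> ('v set \<Rightarrow> nat) \<Rightarrow>
   'v set \<Rightarrow> ('v set \<Rightarrow> nat) \<Rightarrow> 'v set \<Rightarrow> ('v set \<Rightarrow> nat) \<Rightarrow> bool" where
  "is_qmatroid_direct_sum scale E \<rho> E1 \<rho>1 E2 \<rho>2 \<longleftrightarrow>
     qdirect_sum scale E E1 E2 \<and>
     (\<forall>V. qsubsp scale E V \<longrightarrow>
        int (\<rho> V) = int (qdim scale V) +
          Min {int (\<rho>1 (qproj1 E1 E2 ` X)) + int (\<rho>2 (qproj2 E1 E2 ` X)) - int (qdim scale X)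
               | X. qsubsp scale V X})"

end

theory Submission
  imports Defs
begin

text \<open>Call a hyperplane W of E deficient if \<open>\<rho> W < \<rho> E\<close>. Unfolding the definition of the cyclic
  core, \<open>cyc(E)\<close> is exactly the set of vectors of E lying in every deficient hyperplane. If a
  subspace V is not contained in a deficient hyperplane W, then V + W = E and submodularity
  forces \<open>\<rho> (V \<inter> W) < \<rho> V\<close>, while \<open>V \<inter> W\<close> has codimension one in V; so cutting V down by such
  hyperplanes never increases the nullity \<open>dim - \<rho>\<close>, and induction on \<open>dim V\<close> shows that the
  nullity of V equals that of \<open>V \<inter> cyc(E)\<close>.

  For \<open>V \<le> E\<^sub>2\<close> this intersection is 0, so V is free. For arbitrary V it shows that
  \<open>X = V \<inter> E\<^sub>1\<close> attains the minimum in the direct-sum rank formula (there \<open>\<pi>\<^sub>1 X = X\<close> and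
  \<open>\<pi>\<^sub>2 X = 0\<close>), the lower bound for other X coming from monotonicity of the nullity and
  \<open>\<rho> X \<le> \<rho> (\<pi>\<^sub>1 X) + \<rho> (\<pi>\<^sub>2 X)\<close>. A cyclic flat F of the q-matroid lies in \<open>cyc(E)\<close>, since for
  \<open>x \<in> F\<close> outside a deficient hyperplane W the subspace \<open>F \<inter> W\<close> is a complement of x in F of
  smaller rank. Conversely a flat of the restriction to \<open>E\<^sub>1\<close> stays a flat in E: adjoining
  \<open>x \<notin> E\<^sub>1\<close> leaves a deficient hyperplane that contains \<open>E\<^sub>1\<close>, so the rank goes up.\<close>

text \<open>\<open>dim\<close> of an infinite-dimensional set is the junk value 0, hence the explicit hypothesis.\<close>

definition finite_dim :: "('f::field \<Rightarrow> 'v::ab_group_add \<Rightarrow> 'v) \<Rightarrow> 'v set \<Rightarrow> bool" where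
  "finite_dim scale V \<longleftrightarrow> (\<exists>T. finite T \<and> V \<subseteq> module.span scale T)"

context vector_space
begin

lemma finite_dim_obtain_basis:
  assumes "finite_dim scale V"
  obtains B where "finite B" "B \<subseteq> V" "independent B" "V \<subseteq> span B" "card B = dim V"
proof -
  obtain T where T: "finite T" "V \<subseteq> span T" using assms unfolding finite_dim_def by blast
  obtain B where B: "B \<subseteq> V" "independent B" "V \<subseteq> span B" "card B = dim V"
    using basis_exists by blast
  have "finite B" using independent_span_bound[OF T(1) B(2)] B(1) T(2) by blast
  with B that show ?thesis by blast
qed

lemma dim_subset_finite_dim: "finite_dim scale V \<Longrightarrow> X \<subseteq> V \<Longrightarrow> dim X \<le> dim V"
  by (metis dim_le_card finite_dim_obtain_basis order_trans)

lemma dim_insert_not_in_span: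
  assumes "finite_dim scale S" "y \<notin> span S"
  shows "dim (insert y S) = Suc (dim S)"
proof -
  obtain B where B: "finite B" "B \<subseteq> S" "independent B" "S \<subseteq> span B" "card B = dim S"
    using finite_dim_obtain_basis[OF assms(1)] .
  have "y \<notin> span B" using assms(2) B(2) span_mono by blast
  then have "independent (insert y B)" "y \<notin> B"
    using independent_insertI[OF _ B(3)] span_base by auto
  moreover have "insert y S \<subseteq> span (insert y B)"
    using B(4) span_mono[of B "insert y B"] span_base[of y "insert y B"] by blast
  ultimately have "card (insert y B) = dim (insert y S)"
    using basis_card_eq_dim[of "insert y B" "insert y S"] B(2) by blast
  then show ?thesis using B(1,5) \<open>y \<notin> B\<close> by simp
qed

lemma dim_zero_space: "dim {0} = 0"
  using dim_le_card[of "{0}" "{}"] by simp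

lemma span_insert_exchange:
  assumes "subspace W" "span (insert x W) = V" "y \<in> V" "y \<notin> W"
  shows "span (insert y W) = V"
proof -
  have "y \<notin> span W" using assms(1,4) span_eq_iff by blast
  then have "x \<in> span (insert y W)"
    using in_span_insert[of y x W] assms(2,3) by blast
  moreover have "insert y W \<subseteq> span (insert x W)"
    using assms(2,3) span_superset by blast
  ultimately show ?thesis
    using assms(2) span_eq span_superset by (metis insert_subset)
qed

lemma span_insert_Int:
  assumes "subspace W" "subspace U" "U \<subseteq> span (insert y W)" "y \<in> U"
  shows "span (insert y (U \<inter> W)) = U"
proof (rule span_subspace)
  show "insert y (U \<inter> W) \<subseteq> U" using assms(4) by blast
  show "U \<subseteq> span (insert y (U \<inter> W))"
  proof
    fix u assume u: "u \<in> U"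
    then have "u \<in> span (insert y W)" using assms(3) by blast
    then obtain k where "u - k *s y \<in> span W" by (auto simp: span_breakdown_eq)
    then have "u - k *s y \<in> W" using span_eq_iff[THEN iffD2, OF assms(1)] by simp
    moreover have "u - k *s y \<in> U" using u assms(2,4) subspace_diff subspace_scale by blast
    ultimately have "u - k *s y \<in> span (U \<inter> W)" using span_base by blast
    then show "u \<in> span (insert y (U \<inter> W))" by (auto simp: span_breakdown_eq)
  qed
qed (rule assms(2))

lemma qplus_span_singleton: "qplus scale W (span {x}) = span (insert x W)"
  unfolding qplus_def span_eq
  using span_superset span_mono[of "{x}" "insert x W"] span_base[of x "{x}"] by blast

lemma mem_qcyc_iff:
  "x \<in> qcyc scale \<rho> V \<longleftrightarrow>
     x \<in> V \<and> (\<forall>W. subspace W \<and> W \<subseteq> V \<and> span (insert x W) = V \<longrightarrow> \<rho> W = \<rho> V)"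
  unfolding qcyc_def qplus_span_singleton by blast

lemma qdirect_sum_commute: "qdirect_sum scale E E1 E2 \<Longrightarrow> qdirect_sum scale E E2 E1"
  unfolding qdirect_sum_def qplus_def by (simp add: Int_commute Un_commute)

lemma qproj2_eq_qproj1_commute: "qproj2 E1 E2 = qproj1 E2 E1"
  unfolding qproj1_def qproj2_def by (simp add: add.commute)

lemma qdirect_sum_decompose:
  assumes "qdirect_sum scale E E1 E2" "v \<in> E"
  obtains a b where "a \<in> E1" "b \<in> E2" "v = a + b"
proof -
  have "subspace E1" "subspace E2" "span (E1 \<union> E2) = E"
    using assms(1) unfolding qdirect_sum_def qsubsp_def qplus_def by auto
  moreover obtain a b where "a \<in> span E1" "b \<in> span E2" "v = a + b"
    using assms(2) calculation(3) span_Un[of E1 E2] by blast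
  ultimately show ?thesis
    using that span_eq_iff by metis
qed

lemma qproj1_add:
  assumes "qdirect_sum scale E E1 E2" "a \<in> E1" "b \<in> E2"
  shows "qproj1 E1 E2 (a + b) = a"
  unfolding qproj1_def
proof (rule the_equality)
  fix a' assume "a' \<in> E1 \<and> (\<exists>b'\<in>E2. a + b = a' + b')"
  then obtain b' where a': "a' \<in> E1" "b' \<in> E2" "a + b = a' + b'" by blast
  have sub: "subspace E1" "subspace E2" and meet: "E1 \<inter> E2 = {0}"
    using assms(1) unfolding qdirect_sum_def qsubsp_def by auto
  have diff: "a - a' = b' - b" using a'(3) by (simp add: algebra_simps)
  have "a - a' \<in> E1" using subspace_diff[OF sub(1) assms(2) a'(1)] .
  moreover have "a - a' \<in> E2" unfolding diff using subspace_diff[OF sub(2) a'(2) assms(3)] .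
  ultimately have "a - a' = 0" using meet by blast
  then show "a' = a" by simp
qed (use assms in blast)

lemma qproj2_add:
  assumes "qdirect_sum scale E E1 E2" "a \<in> E1" "b \<in> E2"
  shows "qproj2 E1 E2 (a + b) = b"
  using qproj1_add[OF qdirect_sum_commute[OF assms(1)] assms(3,2)]
  by (simp add: qproj2_eq_qproj1_commute add.commute)

lemma qproj1_image:
  assumes "qdirect_sum scale E E1 E2" "X \<subseteq> E"
  shows "qproj1 E1 E2 ` X = {a \<in> E1. \<exists>b\<in>E2. a + b \<in> X}"
proof (intro set_eqI iffI)
  fix a assume "a \<in> qproj1 E1 E2 ` X"
  then obtain v where v: "v \<in> X" "a = qproj1 E1 E2 v" by blast
  obtain a' b where "a' \<in> E1" "b \<in> E2" "v = a' + b"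
    using qdirect_sum_decompose[OF assms(1)] v(1) assms(2) by blast
  then show "a \<in> {a \<in> E1. \<exists>b\<in>E2. a + b \<in> X}"
    using v qproj1_add[OF assms(1)] by auto
qed (use qproj1_add[OF assms(1)] in force)

lemma qsubsp_qproj1_image:
  assumes "qdirect_sum scale E E1 E2" "subspace X" "X \<subseteq> E"
  shows "qsubsp scale E1 (qproj1 E1 E2 ` X)"
proof -
  have E12: "subspace E1" "subspace E2"
    using assms(1) unfolding qdirect_sum_def qsubsp_def by auto
  have "subspace {a \<in> E1. \<exists>b\<in>E2. a + b \<in> X}"
  proof (rule subspaceI)
    show "0 \<in> {a \<in> E1. \<exists>b\<in>E2. a + b \<in> X}"
      using E12 assms(2) subspace_0 by force
  next
    fix x y assume "x \<in> {a \<in> E1. \<exists>b\<in>E2. a + b \<in> X}" "y \<in> {a \<in> E1. \<exists>b\<in>E2. a + b \<in> X}"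
    then obtain b b' where "x \<in> E1" "y \<in> E1" "b \<in> E2" "b' \<in> E2" "x + b \<in> X" "y + b' \<in> X"
      by blast
    moreover have "(x + y) + (b + b') = (x + b) + (y + b')" by (simp add: algebra_simps)
    ultimately show "x + y \<in> {a \<in> E1. \<exists>b\<in>E2. a + b \<in> X}"
      using E12 assms(2) subspace_add by (metis (mono_tags, lifting) mem_Collect_eq)
  next
    fix c x assume "x \<in> {a \<in> E1. \<exists>b\<in>E2. a + b \<in> X}"
    then obtain b where "x \<in> E1" "b \<in> E2" "x + b \<in> X" by blast
    moreover have "c *s x + c *s b = c *s (x + b)" by (simp add: scale_right_distrib)
    ultimately show "c *s x \<in> {a \<in> E1. \<exists>b\<in>E2. a + b \<in> X}"
      using E12 assms(2) subspace_scale by (metis (mono_tags, lifting) mem_Collect_eq)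
  qed
  then show ?thesis
    unfolding qsubsp_def qproj1_image[OF assms(1,3)] by blast
qed

lemma qsubsp_qproj2_image:
  assumes "qdirect_sum scale E E1 E2" "subspace X" "X \<subseteq> E"
  shows "qsubsp scale E2 (qproj2 E1 E2 ` X)"
  using qsubsp_qproj1_image[OF qdirect_sum_commute[OF assms(1)] assms(2,3)]
  by (simp add: qproj2_eq_qproj1_commute)

lemma subset_span_qproj_images:
  assumes "qdirect_sum scale E E1 E2" "X \<subseteq> E"
  shows "X \<subseteq> span (qproj1 E1 E2 ` X \<union> qproj2 E1 E2 ` X)"
proof
  fix v assume v: "v \<in> X"
  then obtain a b where ab: "a \<in> E1" "b \<in> E2" "v = a + b"
    using qdirect_sum_decompose[OF assms(1)] assms(2) by blast
  then have "a \<in> qproj1 E1 E2 ` X" "b \<in> qproj2 E1 E2 ` X"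
    using v qproj1_add[OF assms(1)] qproj2_add[OF assms(1)] by (metis image_eqI)+
  then show "v \<in> span (qproj1 E1 E2 ` X \<union> qproj2 E1 E2 ` X)"
    using ab(3) span_add span_base by (metis UnI1 UnI2)
qed

lemma qproj_images_of_subset:
  assumes "qdirect_sum scale E E1 E2" "X \<subseteq> E1" "0 \<in> X"
  shows "qproj1 E1 E2 ` X = X" "qproj2 E1 E2 ` X = {0}"
proof -
  have "0 \<in> E2" using assms(1) unfolding qdirect_sum_def by auto
  then have "qproj1 E1 E2 a = a" "qproj2 E1 E2 a = 0" if "a \<in> X" for a
    using qproj1_add[OF assms(1), of a 0] qproj2_add[OF assms(1), of a 0] that assms(2) by auto
  then show "qproj1 E1 E2 ` X = X" "qproj2 E1 E2 ` X = {0}"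
    using assms(3) by force+
qed

end

locale qmatroid =
  fixes scale :: "'f::field \<Rightarrow> 'v::ab_group_add \<Rightarrow> 'v" and E :: "'v set" and \<rho> :: "'v set \<Rightarrow> nat"
  assumes is_qmatroid: "is_qmatroid scale E \<rho>"
begin

sublocale vector_space scale
  using is_qmatroid unfolding is_qmatroid_def by blast

lemma subspace_ambient: "subspace E"
  using is_qmatroid unfolding is_qmatroid_def by blast

lemma finite_dim_ambient_subset: "V \<subseteq> E \<Longrightarrow> finite_dim scale V"
  using is_qmatroid unfolding is_qmatroid_def finite_dim_def by blast

lemma span_ambient_subset: "A \<subseteq> E \<Longrightarrow> span A \<subseteq> E"
  using span_minimal subspace_ambient by blast

lemma rank_le_dim: "subspace V \<Longrightarrow> V \<subseteq> E \<Longrightarrow> \<rho> V \<le> dim V"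
  using is_qmatroid unfolding is_qmatroid_def qsubsp_def qdim_def by blast

lemma rank_mono: "subspace V \<Longrightarrow> subspace W \<Longrightarrow> W \<subseteq> E \<Longrightarrow> V \<subseteq> W \<Longrightarrow> \<rho> V \<le> \<rho> W"
  using is_qmatroid unfolding is_qmatroid_def qsubsp_def by (meson order_trans)

lemma rank_submodular:
  "subspace V \<Longrightarrow> V \<subseteq> E \<Longrightarrow> subspace W \<Longrightarrow> W \<subseteq> E \<Longrightarrow>
    \<rho> (span (V \<union> W)) + \<rho> (V \<inter> W) \<le> \<rho> V + \<rho> W"
  using is_qmatroid unfolding is_qmatroid_def qsubsp_def qplus_def by blast

lemma rank_zero: "\<rho> {0} = 0"
  using rank_le_dim[of "{0}"] dim_zero_space subspace_0[OF subspace_ambient] by simp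

lemma rank_span_insert_le:
  assumes "subspace S" "S \<subseteq> E" "x \<in> E"
  shows "\<rho> (span (insert x S)) \<le> Suc (\<rho> S)"
proof -
  have line: "subspace (span {x})" "span {x} \<subseteq> E"
    using assms(3) span_ambient_subset by auto
  have "\<rho> (span {x}) \<le> 1"
    using rank_le_dim[OF line] dim_le_card[of "span {x}" "{x}"] by simp
  moreover have "\<rho> (span (insert x S)) \<le> \<rho> S + \<rho> (span {x})"
    using rank_submodular[OF assms(1,2) line] qplus_span_singleton[of S x]
    unfolding qplus_def by simp
  ultimately show ?thesis by simp
qed

text \<open>Nullities \<open>dim - \<rho>\<close> are compared in additive form to avoid truncated subtraction.\<close>

lemma nullity_mono:
  assumes "subspace X" "subspace V" "X \<subseteq> V" "V \<subseteq> E"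
  shows "\<rho> V + dim X \<le> \<rho> X + dim V"
  using assms(1,3)
proof (induction "dim V - dim X" arbitrary: X rule: less_induct)
  case less
  show ?case
  proof (cases "V \<subseteq> X")
    case True
    then show ?thesis using less.prems by auto
  next
    case False
    then obtain y where y: "y \<in> V" "y \<notin> X" by blast
    define X' where "X' = span (insert y X)"
    have X': "subspace X'" "X' \<subseteq> V"
      unfolding X'_def using y(1) less.prems span_minimal[OF _ assms(2)] by auto
    have "y \<notin> span X" using y(2) less.prems(1) span_eq_iff by blast
    then have dim_X': "dim X' = Suc (dim X)"
      unfolding X'_def dim_span
      using dim_insert_not_in_span finite_dim_ambient_subset less.prems(2) assms(4) by blast
    moreover have "dim X' \<le> dim V"
      using dim_subset_finite_dim finite_dim_ambient_subset assms(4) X'(2) by blast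
    ultimately have "\<rho> V + dim X' \<le> \<rho> X' + dim V"
      using less.hyps[OF _ X'] by simp
    moreover have "\<rho> X' \<le> Suc (\<rho> X)"
      unfolding X'_def using rank_span_insert_le less.prems y(1) assms(4) by blast
    ultimately show ?thesis using dim_X' by simp
  qed
qed

text \<open>A hyperplane is encoded as a W with \<open>W + \<langle>x\<rangle> = E\<close>; the rank condition excludes \<open>W = E\<close>.\<close>

definition deficient_hyperplane :: "'v set \<Rightarrow> bool" where
  "deficient_hyperplane W \<longleftrightarrow>
     subspace W \<and> W \<subseteq> E \<and> (\<exists>x. span (insert x W) = E) \<and> \<rho> W < \<rho> E"

lemma deficient_hyperplane_span_insert:
  assumes "deficient_hyperplane W" "y \<in> E" "y \<notin> W"
  shows "span (insert y W) = E"
  using assms span_insert_exchange unfolding deficient_hyperplane_def by blast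

lemma deficient_hyperplane_avoiding:
  assumes "x \<in> E" "x \<notin> qcyc scale \<rho> E"
  obtains W where "deficient_hyperplane W" "x \<notin> W"
proof -
  obtain W where W: "subspace W" "W \<subseteq> E" "span (insert x W) = E" "\<rho> W \<noteq> \<rho> E"
    using assms unfolding mem_qcyc_iff by blast
  have "\<rho> W < \<rho> E" using W rank_mono[OF W(1) subspace_ambient] by simp
  moreover have "x \<notin> W"
  proof
    assume "x \<in> W"
    then have "span (insert x W) = W" using W(1) by (simp add: insert_absorb)
    then show False using W by simp
  qed
  ultimately show ?thesis using that W unfolding deficient_hyperplane_def by blast
qed

lemma qcyc_subset_deficient_hyperplane:
  assumes "deficient_hyperplane W"
  shows "qcyc scale \<rho> E \<subseteq> W"
proof
  fix y assume y: "y \<in> qcyc scale \<rho> E"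
  show "y \<in> W"
  proof (rule ccontr)
    assume "y \<notin> W"
    then have "span (insert y W) = E"
      using deficient_hyperplane_span_insert assms y unfolding qcyc_def by blast
    then show False using y assms unfolding mem_qcyc_iff deficient_hyperplane_def by auto
  qed
qed

lemma rank_Int_deficient_hyperplane_less:
  assumes "deficient_hyperplane W" "subspace U" "U \<subseteq> E" "\<not> U \<subseteq> W"
  shows "\<rho> (U \<inter> W) < \<rho> U"
proof -
  obtain u where u: "u \<in> U" "u \<notin> W" using assms(4) by blast
  have W: "subspace W" "W \<subseteq> E" "\<rho> W < \<rho> E"
    using assms(1) unfolding deficient_hyperplane_def by auto
  have "E = span (insert u W)"
    using deficient_hyperplane_span_insert assms(1,3) u by blast
  also have "\<dots> \<subseteq> span (U \<union> W)" using u(1) by (intro span_mono) auto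
  finally have "span (U \<union> W) = E"
    using span_ambient_subset assms(3) W(2) by (simp add: subset_antisym)
  then show ?thesis
    using rank_submodular[OF assms(2,3) W(1,2)] W(3) by simp
qed

lemma nullity_le_nullity_Int_qcyc:
  assumes "subspace V" "V \<subseteq> E"
  shows "\<rho> (V \<inter> qcyc scale \<rho> E) + dim V \<le> \<rho> V + dim (V \<inter> qcyc scale \<rho> E)"
  using assms
proof (induction "dim V" arbitrary: V rule: less_induct)
  case less
  let ?C = "qcyc scale \<rho> E"
  show ?case
  proof (cases "V \<subseteq> ?C")
    case True
    then show ?thesis by (simp add: Int_absorb2)
  next
    case False
    then obtain y where y: "y \<in> V" "y \<notin> ?C" by blast
    obtain W where W: "deficient_hyperplane W" "y \<notin> W"
      using deficient_hyperplane_avoiding y less.prems(2) by blast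
    have sW: "subspace W" "span (insert y W) = E"
      using W deficient_hyperplane_span_insert less.prems(2) y(1)
      unfolding deficient_hyperplane_def by auto
    define V' where "V' = V \<inter> W"
    have V': "subspace V'" "V' \<subseteq> E" "V' \<inter> ?C = V \<inter> ?C"
      unfolding V'_def using subspace_inter[OF less.prems(1) sW(1)] less.prems(2)
        qcyc_subset_deficient_hyperplane[OF W(1)] by auto
    have "span (insert y V') = V"
      unfolding V'_def using span_insert_Int sW less.prems y(1) by simp
    moreover have "y \<notin> span V'"
      using W(2) span_eq_iff[THEN iffD2, OF V'(1)] unfolding V'_def by blast
    ultimately have dim_V: "dim V = Suc (dim V')"
      using dim_insert_not_in_span[OF finite_dim_ambient_subset[OF V'(2)]] dim_span by metis
    have "\<rho> V' < \<rho> V"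
      unfolding V'_def
      using rank_Int_deficient_hyperplane_less[OF W(1) less.prems] W(2) y(1) by blast
    moreover have "\<rho> (V' \<inter> ?C) + dim V' \<le> \<rho> V' + dim (V' \<inter> ?C)"
      using less.hyps[OF _ V'(1,2)] dim_V by simp
    ultimately show ?thesis using V'(3) dim_V by simp
  qed
qed

lemma rank_eq_dim_if_Int_qcyc_trivial:
  assumes "subspace V" "V \<subseteq> E" "V \<inter> qcyc scale \<rho> E = {0}"
  shows "\<rho> V = dim V"
  using nullity_le_nullity_Int_qcyc[OF assms(1,2)] rank_le_dim[OF assms(1,2)]
  unfolding assms(3) rank_zero dim_zero_space by simp

lemma is_free_qmatroid_qcyc_complement:
  assumes "qdirect_sum scale E (qcyc scale \<rho> E) E2"
  shows "is_free_qmatroid scale E2 \<rho>"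
  unfolding is_free_qmatroid_def qsubsp_def qdim_def
proof (intro allI impI)
  fix V assume V: "subspace V \<and> V \<subseteq> E2"
  have E2: "E2 \<subseteq> E" and meet: "qcyc scale \<rho> E \<inter> E2 = {0}"
    using assms unfolding qdirect_sum_def qsubsp_def by auto
  then have "V \<inter> qcyc scale \<rho> E = {0}" using V subspace_0 by blast
  then show "\<rho> V = dim V" using rank_eq_dim_if_Int_qcyc_trivial V E2 by blast
qed

lemma qcyclic_subset_qcyc:
  assumes "subspace F" "F \<subseteq> E" "qcyclic scale \<rho> F"
  shows "F \<subseteq> qcyc scale \<rho> E"
proof
  fix x assume x: "x \<in> F"
  show "x \<in> qcyc scale \<rho> E"
  proof (rule ccontr)
    assume "x \<notin> qcyc scale \<rho> E"
    then obtain W where W: "deficient_hyperplane W" "x \<notin> W"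
      using deficient_hyperplane_avoiding x assms(2) by blast
    have sW: "subspace W" "span (insert x W) = E"
      using W deficient_hyperplane_span_insert x assms(2)
      unfolding deficient_hyperplane_def by auto
    have "span (insert x (F \<inter> W)) = F"
      using span_insert_Int sW assms(1,2) x by simp
    moreover have "x \<in> qcyc scale \<rho> F" using assms(3) x unfolding qcyclic_def by simp
    ultimately have "\<rho> (F \<inter> W) = \<rho> F"
      unfolding mem_qcyc_iff using subspace_inter[OF assms(1) sW(1)] by blast
    moreover have "\<rho> (F \<inter> W) < \<rho> F"
      using rank_Int_deficient_hyperplane_less[OF W(1) assms(1,2)] W(2) x by blast
    ultimately show False by simp
  qed
qed

lemma qflat_of_qflat_qcyc:
  assumes "qflat scale (qcyc scale \<rho> E) \<rho> F"
  shows "qflat scale E \<rho> F"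
proof -
  have F: "subspace F" "F \<subseteq> qcyc scale \<rho> E"
    and flat: "\<And>x. x \<in> qcyc scale \<rho> E - F \<Longrightarrow> \<rho> F < \<rho> (span (insert x F))"
    using assms unfolding qflat_def qsubsp_def qplus_span_singleton by auto
  have FE: "F \<subseteq> E" using F(2) unfolding qcyc_def by blast
  have "\<rho> F < \<rho> (span (insert x F))" if x: "x \<in> E - F" for x
  proof (cases "x \<in> qcyc scale \<rho> E")
    case True
    then show ?thesis using flat x by blast
  next
    case False
    then obtain W where W: "deficient_hyperplane W" "x \<notin> W"
      using deficient_hyperplane_avoiding x by blast
    define U where "U = span (insert x F)"
    have U: "subspace U" "U \<subseteq> E" "x \<in> U"
      unfolding U_def using x FE span_ambient_subset span_base by auto
    have "F \<subseteq> U \<inter> W"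
      using F(2) qcyc_subset_deficient_hyperplane[OF W(1)] span_superset unfolding U_def by blast
    then have "\<rho> F \<le> \<rho> (U \<inter> W)"
      using rank_mono F(1) subspace_inter[OF U(1)] U(2) W(1)
      unfolding deficient_hyperplane_def by blast
    also have "\<dots> < \<rho> U"
      using rank_Int_deficient_hyperplane_less[OF W(1) U(1,2)] U(3) W(2) by blast
    finally show ?thesis unfolding U_def .
  qed
  then show ?thesis
    unfolding qflat_def qsubsp_def qplus_span_singleton using F(1) FE by blast
qed

lemma qcyclic_flats_qcyc:
  "qcyclic_flats scale E \<rho> = qcyclic_flats scale (qcyc scale \<rho> E) \<rho>"
proof (intro set_eqI iffI)
  fix F assume "F \<in> qcyclic_flats scale E \<rho>"
  then have "qflat scale E \<rho> F" "qcyclic scale \<rho> F" "subspace F" "F \<subseteq> E"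
    unfolding qcyclic_flats_def qflat_def qsubsp_def by auto
  moreover from calculation have "F \<subseteq> qcyc scale \<rho> E"
    using qcyclic_subset_qcyc by blast
  moreover have "qcyc scale \<rho> E \<subseteq> E" unfolding qcyc_def by blast
  ultimately show "F \<in> qcyclic_flats scale (qcyc scale \<rho> E) \<rho>"
    unfolding qcyclic_flats_def qflat_def qsubsp_def by blast
next
  fix F assume "F \<in> qcyclic_flats scale (qcyc scale \<rho> E) \<rho>"
  then show "F \<in> qcyclic_flats scale E \<rho>"
    using qflat_of_qflat_qcyc unfolding qcyclic_flats_def by blast
qed

lemma rank_le_rank_qproj_images:
  assumes "qdirect_sum scale E E1 E2" "subspace X" "X \<subseteq> E"
  shows "\<rho> X \<le> \<rho> (qproj1 E1 E2 ` X) + \<rho> (qproj2 E1 E2 ` X)"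
proof -
  have "E1 \<subseteq> E" "E2 \<subseteq> E" using assms(1) unfolding qdirect_sum_def qsubsp_def by auto
  then have P: "subspace (qproj1 E1 E2 ` X)" "qproj1 E1 E2 ` X \<subseteq> E"
    "subspace (qproj2 E1 E2 ` X)" "qproj2 E1 E2 ` X \<subseteq> E"
    using qsubsp_qproj1_image[OF assms] qsubsp_qproj2_image[OF assms]
    unfolding qsubsp_def by auto
  have "\<rho> X \<le> \<rho> (span (qproj1 E1 E2 ` X \<union> qproj2 E1 E2 ` X))"
    using rank_mono[OF assms(2) subspace_span] subset_span_qproj_images[OF assms(1,3)]
      span_ambient_subset P(2,4) by simp
  also have "\<dots> \<le> \<rho> (qproj1 E1 E2 ` X) + \<rho> (qproj2 E1 E2 ` X)"
    using rank_submodular[OF P] by simp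
  finally show ?thesis .
qed

lemma is_qmatroid_direct_sum_qcyc:
  assumes "qdirect_sum scale E (qcyc scale \<rho> E) E2" (is "qdirect_sum _ _ ?C _")
  shows "is_qmatroid_direct_sum scale E \<rho> ?C \<rho> E2 \<rho>"
  unfolding is_qmatroid_direct_sum_def
proof (intro conjI allI impI assms)
  fix V assume "qsubsp scale E V"
  then have V: "subspace V" "V \<subseteq> E" unfolding qsubsp_def by auto
  define f where "f X = int (\<rho> (qproj1 ?C E2 ` X)) + int (\<rho> (qproj2 ?C E2 ` X)) - int (qdim scale X)"
    for X
  have lower: "int (\<rho> V) - int (dim V) \<le> f X" if "qsubsp scale V X" for X
  proof -
    have X: "subspace X" "X \<subseteq> V" using that unfolding qsubsp_def by auto
    have "\<rho> V + dim X \<le> \<rho> X + dim V" using nullity_mono[OF X(1) V(1) X(2) V(2)] .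
    moreover have "\<rho> X \<le> \<rho> (qproj1 ?C E2 ` X) + \<rho> (qproj2 ?C E2 ` X)"
      using rank_le_rank_qproj_images[OF assms X(1)] X(2) V(2) by blast
    ultimately show ?thesis unfolding f_def qdim_def by linarith
  qed
  have upper: "f X \<le> 2 * int (\<rho> E)" if "qsubsp scale V X" for X
  proof -
    have X: "subspace X" "X \<subseteq> E" using that V(2) unfolding qsubsp_def by auto
    have "?C \<subseteq> E" "E2 \<subseteq> E" using assms unfolding qdirect_sum_def qsubsp_def by auto
    then have "\<rho> (qproj1 ?C E2 ` X) \<le> \<rho> E" "\<rho> (qproj2 ?C E2 ` X) \<le> \<rho> E"
      using qsubsp_qproj1_image[OF assms X] qsubsp_qproj2_image[OF assms X]
        rank_mono[OF _ subspace_ambient] unfolding qsubsp_def by auto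
    then show ?thesis unfolding f_def by linarith
  qed
  \<comment> \<open>\<open>Min\<close> is junk on infinite sets; the values of f lie in a bounded interval.\<close>
  have fin: "finite {f X | X. qsubsp scale V X}"
    by (rule finite_subset[of _ "{int (\<rho> V) - int (dim V) .. 2 * int (\<rho> E)}"])
      (use lower upper in auto)
  define X0 where "X0 = V \<inter> ?C"
  have X0: "qsubsp scale V X0" "X0 \<subseteq> ?C" "0 \<in> X0"
    using subspace_inter[OF V(1)] subspace_0[OF V(1)] assms
    unfolding X0_def qdirect_sum_def qsubsp_def by auto
  have "f X0 = int (\<rho> X0) - int (dim X0)"
    using qproj_images_of_subset[OF assms X0(2,3)] rank_zero unfolding f_def qdim_def by simp
  also have "\<dots> = int (\<rho> V) - int (dim V)"
  proof -
    have "\<rho> X0 + dim V \<le> \<rho> V + dim X0"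
      using nullity_le_nullity_Int_qcyc[OF V] unfolding X0_def .
    moreover have "\<rho> V + dim X0 \<le> \<rho> X0 + dim V"
      using nullity_mono[OF _ V(1) _ V(2)] X0(1) unfolding qsubsp_def by blast
    ultimately show ?thesis by linarith
  qed
  finally have attained: "f X0 = int (\<rho> V) - int (dim V)" .
  have "Min {f X | X. qsubsp scale V X} = int (\<rho> V) - int (dim V)"
    by (rule Min_eqI[OF fin]) (use lower attained[symmetric] X0(1) in auto)
  then show "int (\<rho> V) = int (qdim scale V) + Min {f X | X. qsubsp scale V X}"
    unfolding qdim_def by simp
qed

end

theorem proposition7p5:
  fixes scale :: "'f::field \<Rightarrow> 'v::ab_group_add \<Rightarrow> 'v"
    and E E1 E2 :: "'v set" and \<rho> :: "'v set \<Rightarrow> nat"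
  assumes "is_qmatroid scale E \<rho>"
    and "E1 = qcyc scale \<rho> E"
    and "qdirect_sum scale E E1 E2"
  shows "is_free_qmatroid scale E2 \<rho> \<and>
         qcyclic_flats scale E \<rho> = qcyclic_flats scale E1 \<rho> \<and>
         is_qmatroid_direct_sum scale E \<rho> E1 \<rho> E2 \<rho>"
proof -
  interpret qmatroid scale E \<rho> by (rule qmatroid.intro) (rule assms(1))
  have "qdirect_sum scale E (qcyc scale \<rho> E) E2" using assms(2,3) by simp
  then show ?thesis
    unfolding assms(2)
    by (intro conjI is_free_qmatroid_qcyc_complement qcyclic_flats_qcyc is_qmatroid_direct_sum_qcyc)
qed

end
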